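(* There is an absolute constant $c>0$ such that the following holds. Let $n\ge1$, $\alpha\in(0,1)$, $\beta\in(0,1/2)$, $\gamma=\sqrt\beta$, and let $D\ge D_0:=\sqrt{\alpha n}$. Let $$\mathcal{S}_D=\{x\in S^{n-1}: \mathrm{LCD}_{\alpha,\beta}(x)\in[D,2D]\text{ and } x \text{ is }(\alpha,\gamma)\text{-incompressible}\},$$ and $\nu=6\beta\sqrt n/D$. Then there exists a set $\mathcal{N}_D\subset\mathcal{S}_D$ such that every $x\in\mathcal{S}_D$ has some $y\in\mathcal{N}_D$ with $\|x-y\|_2\le\nu$, and $$|\mathcal{N}_D|\le\frac{D}{\beta}\left(\frac{cD}{\sqrt{\alpha n}}\right)^n\left(\frac1\beta\right)^{\alpha n}.$$
   Context: For $y\in\mathbb{R}^n$ write $y=[y]+\{y\}$ with $[y]\in\mathbb{Z}^n$ and $\{y\}\in[-1/2,1/2]^n$ (coordinatewise nearest-integer rounding). For $\alpha,\gamma\in(0,1)$, a unit vector $x\in S^{n-1}$ is $(\alpha,\gamma)$-compressible if $x=u+v$ where $u$ has at most $\alpha n$ nonzero coordinates and $\|v\|_2\le\gamma$; otherwise $x$ is $(\alpha,\gamma)$-incompressible. For $x\in S^{n-1}$, $\mathrm{LCD}_{\alpha,\beta}(x)$ is the infimum of all $D>0$ such that $\{Dx\}=u+v$ with $u$ having at most $\alpha n$ nonzero coordinates and $\|v\|_2\le\beta\min(D,\sqrt n)$ (infimum of the empty set being $+\infty$). *)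

theory Defs
  imports "HOL-Analysis.Analysis"
begin

text \<open>Vectors in R^n are represented as functions nat => real; only coordinates i < n matter.
  The dimension n is an explicit natural number because the constant c must be uniform in n.\<close>

definition l2 :: "nat \<Rightarrow> (nat \<Rightarrow> real) \<Rightarrow> real" where
  "l2 n x = sqrt (\<Sum>i<n. (x i)^2)"

definition unit_sphere :: "nat \<Rightarrow> (nat \<Rightarrow> real) set" where
  "unit_sphere n = {x. (\<forall>i\<ge>n. x i = 0) \<and> l2 n x = 1}"

definition fracr :: "real \<Rightarrow> real" where
  "fracr y = y - of_int (round y)"

definition sparse :: "nat \<Rightarrow> real \<Rightarrow> (nat \<Rightarrow> real) \<Rightarrow> bool" where
  "sparse n \<alpha> u \<longleftrightarrow> real (card {i\<in>{..<n}. u i \<noteq> 0}) \<le> \<alpha> * real n"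

definition compressible :: "nat \<Rightarrow> real \<Rightarrow> real \<Rightarrow> (nat \<Rightarrow> real) \<Rightarrow> bool" where
  "compressible n \<alpha> \<gamma> x \<longleftrightarrow>
     (\<exists>u v. (\<forall>i<n. x i = u i + v i) \<and> sparse n \<alpha> u \<and> l2 n v \<le> \<gamma>)"

definition LCD :: "nat \<Rightarrow> real \<Rightarrow> real \<Rightarrow> (nat \<Rightarrow> real) \<Rightarrow> ereal" where
  "LCD n \<alpha> \<beta> x = Inf {ereal D | D. D > 0 \<and>
     (\<exists>u v. (\<forall>i<n. fracr (D * x i) = u i + v i) \<and> sparse n \<alpha> u \<and>
            l2 n v \<le> \<beta> * min D (sqrt (real n)))}"

definition S_D :: "nat \<Rightarrow> real \<Rightarrow> real \<Rightarrow> real \<Rightarrow> (nat \<Rightarrow> real) set" where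
  "S_D n \<alpha> \<beta> D = {x \<in> unit_sphere n. ereal D \<le> LCD n \<alpha> \<beta> x \<and> LCD n \<alpha> \<beta> x \<le> ereal (2*D)
      \<and> \<not> compressible n \<alpha> (sqrt \<beta>) x}"

end

theory Submission
  imports Defs
begin

text \<open>For \<open>x \<in> S_D\<close> the definition of the LCD provides \<open>d \<in> [D, 3D)\<close> and a splitting
  \<open>{d x} = u + v\<close> with \<open>u\<close> sparse and \<open>\<parallel>v\<parallel> \<le> \<beta> \<surd>n\<close>. Rounding \<open>d x\<close> to the grid
  \<open>h\<int>\<close> (\<open>h = 2\<beta>/3\<close>) on the support \<open>S\<close> of \<open>u\<close> and to \<open>\<int>\<close> elsewhere moves it by at most
  \<open>\<parallel>v\<parallel> + h\<surd>n/2\<close>, so after normalisation \<open>x\<close> lies within \<open>(8/3) \<beta> \<surd>n / D\<close> of a point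
  determined by the code \<open>(S, rounded coordinates)\<close>. The codes have weighted \<open>\<ell>\<^sup>1\<close> norm at
  most \<open>K = 3D\<surd>n + n/2\<close>, and an exponential moment bound counts them by
  \<open>2\<^sup>n e\<^sup>n (1 + 2K/n)\<^sup>n (1/h) powr (\<alpha> n)\<close>. One point of \<open>S_D\<close> per occurring code is the net.
  Incompressibility forces every admissible \<open>d\<close> to be at least 1/2, hence \<open>D \<ge> 1/4\<close> when
  \<open>S_D\<close> is nonempty, which absorbs the remaining constants.\<close>

lemma L2_set_cmult: "L2_set (\<lambda>i. c * f i) A = \<bar>c\<bar> * L2_set f A"
  unfolding L2_set_def
  by (simp add: power_mult_distrib real_sqrt_mult flip: sum_distrib_left)

lemma L2_set_abs: "L2_set (\<lambda>i. \<bar>f i\<bar>) A = L2_set f A"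
  unfolding L2_set_def by simp

lemma L2_set_diff_commute: "L2_set (\<lambda>i. f i - g i) A = L2_set (\<lambda>i. g i - f i) A"
  unfolding L2_set_def by (simp add: power2_commute)

lemma L2_set_diff_triangle:
  "L2_set (\<lambda>i. f i - g i) A \<le> L2_set (\<lambda>i. f i - h i) A + L2_set (\<lambda>i. h i - g i) A"
  using L2_set_triangle_ineq[of "\<lambda>i. f i - h i" "\<lambda>i. h i - g i" A] by simp

lemma abs_L2_set_diff_le: "\<bar>L2_set f A - L2_set g A\<bar> \<le> L2_set (\<lambda>i. f i - g i) A"
  using L2_set_diff_triangle[of f "\<lambda>_. 0" A g] L2_set_diff_triangle[of g "\<lambda>_. 0" A f]
    L2_set_diff_commute[of f g A] by simp

lemma L2_set_sub_normalized_le: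
  assumes x: "L2_set x A = 1" and d: "d > 0"
  shows "L2_set (\<lambda>i. x i - b i / L2_set b A) A \<le> 2 * L2_set (\<lambda>i. d * x i - b i) A / d"
proof -
  define nb where "nb = L2_set b A"
  define E where "E = L2_set (\<lambda>i. d * x i - b i) A"
  have "\<bar>d - nb\<bar> \<le> E"
    using abs_L2_set_diff_le[of "\<lambda>i. d * x i" A b] x d unfolding E_def nb_def by (simp add: L2_set_cmult)
  then have scale: "\<bar>1/d - 1/nb\<bar> * nb \<le> E / d"
    using d by (cases "nb = 0") (simp_all add: nb_def E_def field_simps abs_minus_commute)
  have "L2_set (\<lambda>i. x i - b i / nb) A = L2_set (\<lambda>i. (1/d) * (d * x i - b i) + (1/d - 1/nb) * b i) A"
    using d by (intro L2_set_cong) (simp_all add: field_simps)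
  also have "\<dots> \<le> E / d + \<bar>1/d - 1/nb\<bar> * nb"
    using L2_set_triangle_ineq[of "\<lambda>i. (1/d) * (d * x i - b i)" "\<lambda>i. (1/d - 1/nb) * b i" A] d
      L2_set_cmult[of "1/d" "\<lambda>i. d * x i - b i" A] L2_set_cmult[of "1/d - 1/nb" b A]
    unfolding E_def nb_def by simp
  also have "\<dots> \<le> 2 * E / d"
    using scale by simp
  finally show ?thesis unfolding nb_def E_def .
qed

lemma l2_eq_L2_set: "l2 n f = L2_set f {..<n}"
  unfolding l2_def L2_set_def by simp

lemma sum_pow_abs_symmetric:
  fixes r :: real
  shows "(\<Sum>j\<in>{-int M..int M}. r ^ nat \<bar>j\<bar>) = 2 * (\<Sum>k\<le>M. r ^ k) - 1"
proof (induction M)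
  case (Suc M)
  have "{-int (Suc M)..int (Suc M)} = insert (-int (Suc M)) (insert (int (Suc M)) {-int M..int M})"
    by auto
  moreover have "nat (1 + int M) = Suc M" "nat (int M + 1) = Suc M" by simp_all
  ultimately show ?case using Suc by simp
qed simp

lemma sum_exp_neg_abs_le:
  fixes a :: real
  assumes "a > 0"
  shows "(\<Sum>j\<in>{-int M..int M}. exp (-a * \<bar>real_of_int j\<bar>)) \<le> 1 + 2 / a"
proof -
  define r where "r = exp (-a)"
  have r: "0 < r" "r < 1" using assms by (simp_all add: r_def)
  have "(\<Sum>j\<in>{-int M..int M}. exp (-a * \<bar>real_of_int j\<bar>)) = 2 * (\<Sum>k<Suc M. r ^ k) - 1"
    using sum_pow_abs_symmetric[where M=M and r=r] lessThan_Suc_atMost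
    by (simp add: r_def exp_of_nat_mult[symmetric] mult.commute)
  also have "\<dots> \<le> 2 / (1 - r) - 1"
  proof -
    have "(\<Sum>k<Suc M. r ^ k) = (1 - r ^ Suc M) / (1 - r)"
      using r by (simp only: sum_gp_strict) simp
    also have "\<dots> \<le> 1 / (1 - r)"
      using r by (intro divide_right_mono) simp_all
    finally show ?thesis by simp
  qed
  also have "\<dots> = 1 + 2 / (exp a - 1)"
    using r by (simp add: r_def exp_minus field_simps)
  also have "\<dots> \<le> 1 + 2 / a"
    using divide_left_mono[of a "exp a - 1" 2] assms exp_ge_add_one_self[of a] by simp
  finally show ?thesis .
qed

definition weight :: "real \<Rightarrow> nat set \<Rightarrow> nat \<Rightarrow> real" where
  "weight h S i = (if i \<in> S then h else 1)"

lemma weight_pos: "0 < h \<Longrightarrow> 0 < weight h S i"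
  by (simp add: weight_def)

lemma weight_le_one: "h \<le> 1 \<Longrightarrow> weight h S i \<le> 1"
  by (simp add: weight_def)

lemma abs_sub_round_scaled_le:
  fixes y w :: real
  assumes "w > 0"
  shows "\<bar>y - w * of_int (round (y / w))\<bar> \<le> w / 2"
proof -
  have "\<bar>y - w * of_int (round (y / w))\<bar> = w * \<bar>of_int (round (y / w)) - y / w\<bar>"
    using assms by (simp add: field_simps abs_mult[symmetric] abs_minus_commute)
  also have "\<dots> \<le> w * (1/2)"
    using assms of_int_round_abs_le[of "y / w"] by (intro mult_left_mono) simp_all
  finally show ?thesis by simp
qed

lemma L2_set_sub_weighted_round_le:
  fixes n :: nat
  assumes dec: "\<forall>i<n. fracr (y i) = u i + v i" and h: "0 < h" "h \<le> 1"
    and S: "S = {i\<in>{..<n}. u i \<noteq> 0}"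
  shows "L2_set (\<lambda>i. y i - weight h S i * of_int (round (y i / weight h S i))) {..<n}
           \<le> L2_set v {..<n} + h/2 * sqrt n"
proof -
  have pointwise: "\<bar>y i - weight h S i * of_int (round (y i / weight h S i))\<bar> \<le> \<bar>v i\<bar> + h/2"
    if "i < n" for i
  proof (cases "i \<in> S")
    case True
    then have "\<bar>y i - weight h S i * of_int (round (y i / weight h S i))\<bar> \<le> h/2"
      using abs_sub_round_scaled_le[OF h(1), of "y i"] by (simp add: weight_def)
    then show ?thesis
      using abs_ge_zero[of "v i"] by linarith
  next
    case False
    then have "fracr (y i) = v i" using dec S that by auto
    with False h show ?thesis by (simp add: weight_def fracr_def)
  qed
  have "L2_set (\<lambda>i. y i - weight h S i * of_int (round (y i / weight h S i))) {..<n}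
      \<le> L2_set (\<lambda>i. \<bar>v i\<bar> + h/2) {..<n}"
    by (subst L2_set_abs[symmetric], rule L2_set_mono) (use pointwise in auto)
  also have "\<dots> \<le> L2_set v {..<n} + h/2 * sqrt n"
    using L2_set_triangle_ineq[of "\<lambda>i. \<bar>v i\<bar>" "\<lambda>_. h/2" "{..<n}"] h
    by (simp add: L2_set_abs L2_set_constant mult.commute)
  finally show ?thesis .
qed

lemma sum_weighted_round_le:
  fixes n :: nat
  assumes x: "L2_set x {..<n} = 1" and d: "d \<ge> 0" and h: "0 < h" "h \<le> 1"
  shows "(\<Sum>i<n. weight h S i * \<bar>of_int (round (d * x i / weight h S i))\<bar>) \<le> d * sqrt n + n/2"
proof -
  have pointwise: "weight h S i * \<bar>of_int (round (d * x i / weight h S i))\<bar> \<le> d * \<bar>x i\<bar> + 1/2" for i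
  proof -
    have "weight h S i * \<bar>of_int (round (d * x i / weight h S i))\<bar>
        \<le> \<bar>d * x i\<bar> + weight h S i / 2"
      using abs_sub_round_scaled_le[OF weight_pos[OF h(1)], of "d * x i" S i] weight_pos[OF h(1), of S i]
        abs_triangle_ineq2[of "weight h S i * of_int (round (d * x i / weight h S i))" "d * x i"]
      by (simp add: abs_mult abs_minus_commute)
    then show ?thesis
      using d weight_le_one[OF h(2), of S i] by (simp add: abs_mult)
  qed
  have "(\<Sum>i<n. \<bar>x i\<bar>) \<le> sqrt n"
    using L2_set_mult_ineq[of x "\<lambda>_. 1" "{..<n}"] x by (simp add: L2_set_constant)
  have "(\<Sum>i<n. weight h S i * \<bar>of_int (round (d * x i / weight h S i))\<bar>)
      \<le> (\<Sum>i<n. d * \<bar>x i\<bar> + 1/2)"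
    by (intro sum_mono pointwise)
  also have "\<dots> = d * (\<Sum>i<n. \<bar>x i\<bar>) + n/2"
    by (simp add: sum.distrib sum_distrib_left)
  also have "\<dots> \<le> d * sqrt n + n/2"
    using \<open>(\<Sum>i<n. \<bar>x i\<bar>) \<le> sqrt n\<close> d by (simp add: mult_left_mono)
  finally show ?thesis .
qed

text \<open>Exponential moment bound: every \<open>k\<close> in the ball has weight
  \<open>exp (\<lambda> (K - \<Sum>\<^sub>i w\<^sub>i \<bar>k\<^sub>i\<bar>)) \<ge> 1\<close>, and the total weight of the box factorises over
  the coordinates.\<close>

lemma card_weighted_l1_box_le:
  fixes A :: "'a set" and w :: "'a \<Rightarrow> real"
  assumes A: "finite A" and w: "\<And>i. i \<in> A \<Longrightarrow> w i > 0" and lam: "lam > 0"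
  shows "real (card {k \<in> PiE A (\<lambda>_. {-int M..int M}). (\<Sum>i\<in>A. w i * \<bar>of_int (k i)\<bar>) \<le> K})
     \<le> exp (lam * K) * (\<Prod>i\<in>A. 1 + 2 / (lam * w i))"
proof -
  define P where "P = PiE A (\<lambda>_. {-int M..int M})"
  define T where "T = {k \<in> P. (\<Sum>i\<in>A. w i * \<bar>of_int (k i)\<bar>) \<le> K}"
  define g where "g k = exp (lam * (K - (\<Sum>i\<in>A. w i * \<bar>of_int (k i)\<bar>)))" for k :: "'a \<Rightarrow> int"
  have "real (card T) = (\<Sum>k\<in>T. 1)" by simp
  also have "\<dots> \<le> (\<Sum>k\<in>T. g k)"
    using lam by (intro sum_mono) (simp add: T_def g_def)
  also have "\<dots> \<le> (\<Sum>k\<in>P. g k)"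
    using A by (intro sum_mono2) (auto simp: P_def T_def g_def finite_PiE)
  also have "\<dots> = (\<Sum>k\<in>P. exp (lam * K) * (\<Prod>i\<in>A. exp (- lam * w i * \<bar>of_int (k i)\<bar>)))"
    unfolding g_def
    by (simp add: exp_sum[OF A, symmetric] exp_add[symmetric] algebra_simps sum_distrib_left sum_negf)
  also have "\<dots> = exp (lam * K) * (\<Prod>i\<in>A. \<Sum>j\<in>{-int M..int M}. exp (- (lam * w i) * \<bar>of_int j\<bar>))"
    unfolding P_def by (simp add: sum_distrib_left prod_sum_PiE[OF A])
  also have "\<dots> \<le> exp (lam * K) * (\<Prod>i\<in>A. 1 + 2 / (lam * w i))"
    using w lam
    by (intro mult_left_mono prod_mono conjI sum_nonneg sum_exp_neg_abs_le) simp_all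
  finally show ?thesis unfolding T_def P_def .
qed

lemma card_weighted_l1_ball_le:
  fixes n :: nat
  assumes n: "n \<ge> 1" and K: "K > 0" and h: "0 < h" "h \<le> 1" and S: "S \<subseteq> {..<n}"
  shows "real (card {k \<in> PiE {..<n} (\<lambda>_. {-int M..int M}).
            (\<Sum>i<n. weight h S i * \<bar>of_int (k i)\<bar>) \<le> K})
         \<le> exp 1 ^ n * (1 + 2 * K / n) ^ n * (1/h) ^ card S"
proof -
  define lam where "lam = real n / K"
  have lam: "lam > 0"
    using n K by (simp add: lam_def)
  have "real (card {k \<in> PiE {..<n} (\<lambda>_. {-int M..int M}).
            (\<Sum>i<n. weight h S i * \<bar>of_int (k i)\<bar>) \<le> K})
     \<le> exp (lam * K) * (\<Prod>i<n. 1 + 2 / (lam * weight h S i))"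
    using h lam by (intro card_weighted_l1_box_le) (simp_all add: weight_pos)
  also have "\<dots> \<le> exp (lam * K) * (\<Prod>i<n. (1 + 2 * K / n) * (1 / weight h S i))"
  proof (intro mult_left_mono prod_mono conjI)
    fix i
    have "weight h S i \<le> 1" and "0 < weight h S i"
      using h by (simp_all add: weight_def)
    then show "1 + 2 / (lam * weight h S i) \<le> (1 + 2 * K / n) * (1 / weight h S i)"
      using n K by (simp add: lam_def field_simps)
  qed (use lam h in \<open>simp_all add: weight_pos less_imp_le\<close>)
  also have "\<dots> = exp 1 ^ n * (1 + 2 * K / n) ^ n * (1/h) ^ card S"
  proof -
    have "exp (lam * K) = exp 1 ^ n"
      using K exp_of_nat_mult[of n 1] by (simp add: lam_def)
    moreover have "(\<Prod>i<n. 1 / weight h S i) = (\<Prod>i\<in>{..<n} \<inter> S. 1/h)"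
      by (simp add: weight_def if_distrib prod.If_cases Int_def)
    moreover have "{..<n} \<inter> S = S"
      using S by blast
    ultimately show ?thesis
      by (simp only: prod.distrib prod_constant card_lessThan mult.assoc)
  qed
  finally show ?thesis .
qed

text \<open>A code is the support \<open>S\<close> of the sparse part of \<open>{d x}\<close> together with the coordinates
  of \<open>d x\<close> rounded to the grid \<open>h\<int>\<close> on \<open>S\<close> and \<open>\<int>\<close> off \<open>S\<close>; \<open>code_point\<close> is the rounded
  point itself.\<close>

definition codes :: "nat \<Rightarrow> real \<Rightarrow> real \<Rightarrow> real \<Rightarrow> (nat set \<times> (nat \<Rightarrow> int)) set" where
  "codes n \<alpha> h K = (SIGMA S:{S. S \<subseteq> {..<n} \<and> real (card S) \<le> \<alpha> * n}.
     {k \<in> PiE {..<n} (\<lambda>_. {-int (nat \<lceil>K / h\<rceil>)..int (nat \<lceil>K / h\<rceil>)}).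
        (\<Sum>i<n. weight h S i * \<bar>of_int (k i)\<bar>) \<le> K})"

definition code_point :: "real \<Rightarrow> nat set \<times> (nat \<Rightarrow> int) \<Rightarrow> nat \<Rightarrow> real" where
  "code_point h p i = weight h (fst p) i * of_int (snd p i)"

lemma finite_codes: "finite (codes n \<alpha> h K)"
proof (rule finite_subset)
  show "codes n \<alpha> h K \<subseteq> Pow {..<n} \<times> PiE {..<n} (\<lambda>_. {-int (nat \<lceil>K / h\<rceil>)..int (nat \<lceil>K / h\<rceil>)})"
    unfolding codes_def by auto
qed (simp add: finite_PiE)

lemma power_le_powr:
  fixes b :: real
  assumes "1 \<le> b" "real k \<le> e"
  shows "b ^ k \<le> b powr e"
  using assms powr_mono[of "real k" e b] by (simp add: powr_realpow)

lemma card_codes_le: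
  fixes n :: nat
  assumes n: "n \<ge> 1" and K: "K > 0" and h: "0 < h" "h \<le> 1"
  shows "real (card (codes n \<alpha> h K)) \<le> 2 ^ n * (exp 1 ^ n * (1 + 2 * K / n) ^ n * (1/h) powr (\<alpha> * n))"
proof -
  define SS where "SS = {S. S \<subseteq> {..<n} \<and> real (card S) \<le> \<alpha> * n}"
  define M where "M = nat \<lceil>K / h\<rceil>"
  define ball where "ball S = {k \<in> PiE {..<n} (\<lambda>_. {-int M..int M}).
        (\<Sum>i<n. weight h S i * \<bar>of_int (k i)\<bar>) \<le> K}" for S
  have fin: "finite SS" "\<And>S. finite (ball S)"
    unfolding SS_def ball_def by (auto intro: finite_subset[OF _ finite_PiE[of "{..<n}"]])
  have "real (card (codes n \<alpha> h K)) = (\<Sum>S\<in>SS. real (card (ball S)))"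
    using fin by (simp add: codes_def SS_def ball_def M_def)
  also have "\<dots> \<le> (\<Sum>S\<in>SS. exp 1 ^ n * (1 + 2 * K / n) ^ n * (1/h) powr (\<alpha> * n))"
  proof (rule sum_mono)
    fix S assume S: "S \<in> SS"
    then have "real (card (ball S)) \<le> exp 1 ^ n * (1 + 2 * K / n) ^ n * (1/h) ^ card S"
      unfolding ball_def by (intro card_weighted_l1_ball_le[OF n K h]) (simp add: SS_def)
    also have "\<dots> \<le> exp 1 ^ n * (1 + 2 * K / n) ^ n * (1/h) powr (\<alpha> * n)"
      using S h K by (intro mult_left_mono power_le_powr) (simp_all add: SS_def)
    finally show "real (card (ball S)) \<le> exp 1 ^ n * (1 + 2 * K / n) ^ n * (1/h) powr (\<alpha> * n)" .
  qed
  also have "\<dots> \<le> 2 ^ n * (exp 1 ^ n * (1 + 2 * K / n) ^ n * (1/h) powr (\<alpha> * n))"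
  proof -
    have "card SS \<le> card (Pow {..<n})"
      by (intro card_mono) (auto simp: SS_def)
    then have "real (card SS) \<le> 2 ^ n"
      by (simp add: card_Pow)
    then show ?thesis
      using K by (simp add: mult_right_mono)
  qed
  finally show ?thesis .
qed

definition LCD_admissible :: "nat \<Rightarrow> real \<Rightarrow> real \<Rightarrow> (nat \<Rightarrow> real) \<Rightarrow> real \<Rightarrow> bool" where
  "LCD_admissible n \<alpha> \<beta> x D \<longleftrightarrow> D > 0 \<and>
     (\<exists>u v. (\<forall>i<n. fracr (D * x i) = u i + v i) \<and> sparse n \<alpha> u \<and>
            l2 n v \<le> \<beta> * min D (sqrt (real n)))"

lemma LCD_eq_Inf_admissible: "LCD n \<alpha> \<beta> x = Inf {ereal D | D. LCD_admissible n \<alpha> \<beta> x D}"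
  unfolding LCD_def LCD_admissible_def by simp

lemma LCD_admissible_between:
  assumes "ereal D \<le> LCD n \<alpha> \<beta> x" "LCD n \<alpha> \<beta> x < ereal E"
  obtains d where "D \<le> d" "d < E" "LCD_admissible n \<alpha> \<beta> x d"
proof -
  obtain y where y: "y \<in> {ereal D | D. LCD_admissible n \<alpha> \<beta> x D}" "y < ereal E"
    using assms(2) by (auto simp: LCD_eq_Inf_admissible Inf_less_iff)
  then obtain d where "y = ereal d" "LCD_admissible n \<alpha> \<beta> x d" by blast
  moreover have "ereal D \<le> y"
    using assms(1) Inf_lower[OF y(1)] by (simp add: LCD_eq_Inf_admissible)
  ultimately show ?thesis using that y(2) by simp
qed

text \<open>Below 1/2 the rounding is trivial, so an admissible decomposition of \<open>d x\<close> would make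
  \<open>x\<close> itself compressible.\<close>

lemma LCD_admissible_ge_half:
  assumes x: "x \<in> unit_sphere n" and nc: "\<not> compressible n \<alpha> (sqrt \<beta>) x"
    and \<beta>: "0 < \<beta>" "\<beta> < 1" and adm: "LCD_admissible n \<alpha> \<beta> x d"
  shows "d \<ge> 1/2"
proof (rule ccontr)
  assume "\<not> d \<ge> 1/2"
  obtain u v where d: "d > 0" and dec: "\<forall>i<n. fracr (d * x i) = u i + v i"
    and sp: "sparse n \<alpha> u" and vb: "l2 n v \<le> \<beta> * min d (sqrt (real n))"
    using adm by (auto simp: LCD_admissible_def)
  have frac_id: "fracr (d * x i) = d * x i" if "i < n" for i
  proof -
    have "\<bar>x i\<bar> \<le> L2_set x {..<n}"
      using member_le_L2_set[of "{..<n}" i "\<lambda>i. \<bar>x i\<bar>"] that by (simp add: L2_set_abs)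
    then have "\<bar>x i\<bar> \<le> 1"
      using x by (simp add: unit_sphere_def l2_eq_L2_set)
    then have "\<bar>d * x i\<bar> \<le> d"
      using d by (simp add: abs_mult mult_left_le)
    then have "\<bar>d * x i - of_int 0\<bar> < 1/2"
      using \<open>\<not> d \<ge> 1/2\<close> by simp
    then show ?thesis
      by (simp add: fracr_def round_unique')
  qed
  have "l2 n (\<lambda>i. v i / d) = l2 n v / d"
    using L2_set_cmult[of "1/d" v "{..<n}"] d by (simp add: l2_eq_L2_set)
  also have "\<dots> \<le> \<beta>"
    using vb d \<beta> by (simp add: divide_le_eq mult_left_mono order_trans[OF _ mult_left_mono])
  also have "\<dots> \<le> sqrt \<beta>"
    using \<beta> by (simp add: real_le_rsqrt power2_eq_square mult_le_one)
  finally have "compressible n \<alpha> (sqrt \<beta>) x"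
    unfolding compressible_def
    using frac_id dec d sp
    by (intro exI[of _ "\<lambda>i. u i / d"] exI[of _ "\<lambda>i. v i / d"])
       (auto simp: field_simps sparse_def)
  with nc show False ..
qed

lemma quarter_le_of_mem_S_D:
  assumes "x \<in> S_D n \<alpha> \<beta> D" "0 < \<beta>" "\<beta> < 1"
  shows "D \<ge> 1/4"
proof -
  have "ereal (1/2) \<le> LCD n \<alpha> \<beta> x"
    unfolding LCD_eq_Inf_admissible
    using assms LCD_admissible_ge_half[of x n \<alpha> \<beta>]
    by (intro Inf_greatest) (auto simp: S_D_def)
  also have "\<dots> \<le> ereal (2 * D)"
    using assms(1) by (simp add: S_D_def)
  finally show ?thesis by simp
qed

lemma mem_box_of_weighted_sum_le:
  fixes n :: nat and k :: "nat \<Rightarrow> int"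
  assumes sum: "(\<Sum>i<n. weight h S i * \<bar>of_int (k i)\<bar>) \<le> K" and h: "0 < h" "h \<le> 1" and i: "i < n"
  shows "k i \<in> {-int (nat \<lceil>K / h\<rceil>)..int (nat \<lceil>K / h\<rceil>)}"
proof -
  have "h * \<bar>of_int (k i)\<bar> \<le> weight h S i * \<bar>of_int (k i)\<bar>"
    using h by (intro mult_right_mono) (simp_all add: weight_def)
  also have "\<dots> \<le> (\<Sum>i<n. weight h S i * \<bar>of_int (k i)\<bar>)"
    using i h by (intro member_le_sum) (simp_all add: weight_pos less_imp_le)
  finally have "\<bar>of_int (k i)\<bar> \<le> K / h"
    using sum h by (simp add: field_simps)
  moreover have "0 \<le> (\<Sum>i<n. weight h S i * \<bar>of_int (k i)\<bar>)"
    using h by (intro sum_nonneg) (simp add: weight_pos less_imp_le)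
  then have "0 \<le> K"
    using sum by linarith
  ultimately have "\<bar>k i\<bar> \<le> \<lceil>K / h\<rceil>" "0 \<le> \<lceil>K / h\<rceil>"
    using h le_of_int_ceiling[of "K / h"] by (simp_all add: ceiling_le_iff[symmetric]) linarith
  then show ?thesis
    by auto
qed

lemma close_to_code_point:
  fixes n :: nat
  assumes x: "x \<in> unit_sphere n" and adm: "LCD_admissible n \<alpha> \<beta> x d" and \<beta>: "0 \<le> \<beta>"
    and h: "0 < h" "h \<le> 1" and K: "d * sqrt n + n/2 \<le> K"
  shows "\<exists>p\<in>codes n \<alpha> h K.
           l2 n (\<lambda>i. x i - code_point h p i / l2 n (code_point h p)) \<le> (2 * \<beta> + h) * sqrt n / d"
proof -
  obtain u v where d: "d > 0" and dec: "\<forall>i<n. fracr (d * x i) = u i + v i"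
    and sp: "sparse n \<alpha> u" and vb: "l2 n v \<le> \<beta> * min d (sqrt (real n))"
    using adm by (auto simp: LCD_admissible_def)
  have x1: "L2_set x {..<n} = 1"
    using x by (simp add: unit_sphere_def l2_eq_L2_set)
  define S where "S = {i\<in>{..<n}. u i \<noteq> 0}"
  define k where "k = restrict (\<lambda>i. round (d * x i / weight h S i)) {..<n}"
  define C where "C i = weight h S i * of_int (round (d * x i / weight h S i))" for i
  have C: "code_point h (S, k) i = C i" if "i < n" for i
    using that by (simp add: code_point_def k_def C_def)
  have sum_k: "(\<Sum>i<n. weight h S i * \<bar>of_int (k i)\<bar>) \<le> K"
    using sum_weighted_round_le[OF x1 less_imp_le[OF d] h, of S] K by (simp add: k_def)
  have "(S, k) \<in> codes n \<alpha> h K"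
    using sp sum_k mem_box_of_weighted_sum_le[OF sum_k h]
    by (auto simp: codes_def S_def sparse_def k_def)
  moreover have "l2 n (\<lambda>i. x i - code_point h (S, k) i / l2 n (code_point h (S, k)))
      \<le> (2 * \<beta> + h) * sqrt n / d"
  proof -
    have "L2_set v {..<n} \<le> \<beta> * sqrt n"
      using vb \<beta> mult_left_mono[OF min.cobounded2 \<beta>, of d "sqrt n"] by (simp add: l2_eq_L2_set)
    then have "L2_set (\<lambda>i. d * x i - C i) {..<n} \<le> \<beta> * sqrt n + h/2 * sqrt n"
      using L2_set_sub_weighted_round_le[OF dec h S_def]
      unfolding C_def by linarith
    then have "2 * L2_set (\<lambda>i. d * x i - C i) {..<n} / d \<le> (2 * \<beta> + h) * sqrt n / d"
      using d by (simp add: divide_right_mono algebra_simps)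
    moreover have "L2_set (code_point h (S, k)) {..<n} = L2_set C {..<n}"
      using C by (intro L2_set_cong) auto
    then have "l2 n (\<lambda>i. x i - code_point h (S, k) i / l2 n (code_point h (S, k)))
        = L2_set (\<lambda>i. x i - C i / L2_set C {..<n}) {..<n}"
      using C by (auto simp: l2_eq_L2_set intro!: L2_set_cong)
    ultimately show ?thesis
      using L2_set_sub_normalized_le[OF x1 d, of C] by linarith
  qed
  ultimately show ?thesis ..
qed

lemma net_of_finite_code:
  assumes C: "finite C" and close: "\<forall>x\<in>X. \<exists>p\<in>C. l2 n (\<lambda>i. x i - c p i) \<le> r" and R: "2 * r \<le> R"
  shows "\<exists>N \<subseteq> X. finite N \<and> card N \<le> card C \<and> (\<forall>x\<in>X. \<exists>y\<in>N. l2 n (\<lambda>i. x i - y i) \<le> R)"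
proof -
  define near where "near p x \<longleftrightarrow> x \<in> X \<and> l2 n (\<lambda>i. x i - c p i) \<le> r" for p x
  define used where "used = {p \<in> C. \<exists>x. near p x}"
  define rep where "rep p = (SOME x. near p x)" for p
  define N where "N = rep ` used"
  have rep: "near p (rep p)" if "p \<in> used" for p
    using that someI_ex[of "near p"] unfolding used_def rep_def by blast
  have "N \<subseteq> X"
    using rep unfolding N_def near_def by blast
  moreover have "finite used"
    using C unfolding used_def by simp
  then have "finite N" "card N \<le> card C"
    unfolding N_def
    using card_image_le card_mono[OF C, of used] le_trans unfolding used_def by blast+
  moreover have "\<exists>y\<in>N. l2 n (\<lambda>i. x i - y i) \<le> R" if "x \<in> X" for x
  proof -
    obtain p where "p \<in> C" and near_x: "near p x"
      using close \<open>x \<in> X\<close> unfolding near_def by blast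
    then have "p \<in> used"
      unfolding used_def by blast
    have "l2 n (\<lambda>i. x i - rep p i) \<le> l2 n (\<lambda>i. x i - c p i) + l2 n (\<lambda>i. rep p i - c p i)"
      using L2_set_diff_triangle[of x "rep p" "{..<n}" "c p"] L2_set_diff_commute[of "c p" "rep p"]
      by (simp add: l2_eq_L2_set)
    also have "\<dots> \<le> R"
      using near_x rep[OF \<open>p \<in> used\<close>] R unfolding near_def by simp
    finally show ?thesis
      using \<open>p \<in> used\<close> unfolding N_def by blast
  qed
  ultimately show ?thesis
    by blast
qed

lemma one_plus_two_radius_div_le:
  fixes n :: nat and \<alpha> D :: real
  assumes n: "n \<ge> 1" and \<alpha>: "0 < \<alpha>" "\<alpha> < 1" and D: "D \<ge> sqrt (\<alpha> * n)"
  shows "1 + 2 * (3 * D * sqrt n + n/2) / n \<le> 8 * (D / sqrt (\<alpha> * n))"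
proof -
  have s: "0 < sqrt (\<alpha> * n)" "sqrt (\<alpha> * n) \<le> sqrt n"
    using n \<alpha> by (simp_all add: mult_left_le_one_le)
  moreover have "0 \<le> D"
    using s D by linarith
  ultimately have "D / sqrt n \<le> D / sqrt (\<alpha> * n)" and "1 \<le> D / sqrt (\<alpha> * n)"
    using D by (simp_all add: divide_left_mono)
  moreover have "1 + 2 * (3 * D * sqrt n + n/2) / n = 2 + 6 * (D / sqrt n)"
    using n by (simp add: field_simps)
  ultimately show ?thesis
    by linarith
qed

lemma inverse_two_thirds_powr_le:
  fixes n :: nat and \<alpha> \<beta> :: real
  assumes \<alpha>: "0 < \<alpha>" "\<alpha> < 1" and \<beta>: "0 < \<beta>"
  shows "(1 / (2 * \<beta> / 3)) powr (\<alpha> * n) \<le> (3/2) ^ n * (1/\<beta>) powr (\<alpha> * n)"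
proof -
  have "(1 / (2 * \<beta> / 3)) powr (\<alpha> * n) = (3/2) powr (\<alpha> * n) * (1/\<beta>) powr (\<alpha> * n)"
    using \<beta> by (simp add: powr_mult[symmetric])
  also have "\<dots> \<le> (3/2) powr (real n) * (1/\<beta>) powr (\<alpha> * n)"
    using \<alpha> by (intro mult_right_mono powr_mono) (simp_all add: mult_left_le_one_le)
  finally show ?thesis
    by (simp add: powr_realpow)
qed

lemma code_count_le_claimed_bound:
  fixes n :: nat and \<alpha> \<beta> D :: real
  assumes n: "n \<ge> 1" and \<alpha>: "0 < \<alpha>" "\<alpha> < 1" and \<beta>: "0 < \<beta>" "\<beta> < 1/2"
    and D: "D \<ge> sqrt (\<alpha> * n)" "D \<ge> 1/4"
  shows "2 ^ n * (exp 1 ^ n * (1 + 2 * (3 * D * sqrt n + n/2) / n) ^ n * (1 / (2 * \<beta> / 3)) powr (\<alpha> * n))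
      \<le> (D / \<beta>) * (150 * D / sqrt (\<alpha> * n)) ^ n * (1 / \<beta>) powr (\<alpha> * n)"
proof -
  define t where "t = D / sqrt (\<alpha> * n)"
  define P where "P = (1 / \<beta>) powr (\<alpha> * n)"
  have "0 < sqrt (\<alpha> * n)"
    using n \<alpha> by simp
  then have t: "1 \<le> t" and P: "0 \<le> P"
    using D(1) by (simp_all add: t_def P_def)
  have "exp 1 ^ n * (1 + 2 * (3 * D * sqrt n + n/2) / n) ^ n \<le> 3 ^ n * (8 * t) ^ n"
    using one_plus_two_radius_div_le[OF n \<alpha> D(1)] D(2) exp_le
    by (intro mult_mono power_mono) (simp_all add: t_def)
  then have "exp 1 ^ n * (1 + 2 * (3 * D * sqrt n + n/2) / n) ^ n * (1 / (2 * \<beta> / 3)) powr (\<alpha> * n)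
      \<le> 3 ^ n * (8 * t) ^ n * ((3/2) ^ n * P)"
    using t by (intro mult_mono[OF _ inverse_two_thirds_powr_le[OF \<alpha> \<beta>(1), of n, folded P_def]]) simp_all
  then have "2 ^ n * (exp 1 ^ n * (1 + 2 * (3 * D * sqrt n + n/2) / n) ^ n * (1 / (2 * \<beta> / 3)) powr (\<alpha> * n))
      \<le> 2 ^ n * (3 ^ n * (8 * t) ^ n * ((3/2) ^ n * P))"
    by (rule mult_left_mono) simp
  also have "\<dots> = (2 * 3 * 8 * (3/2) * t) ^ n * P"
    by (simp only: power_mult_distrib mult_ac)
  also have "\<dots> = (72 * t) ^ n * P"
    by simp
  also have "\<dots> \<le> (1/2) * (150 * t) ^ n * P"
  proof -
    have "2 * (72 * t) ^ n \<le> 2 ^ n * (72 * t) ^ n"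
      using n t by (intro mult_right_mono) (simp_all add: self_le_power)
    also have "\<dots> = (2 * 72 * t) ^ n"
      by (simp only: power_mult_distrib mult.assoc)
    also have "\<dots> \<le> (150 * t) ^ n"
      using t by (intro power_mono) simp_all
    finally have "(72 * t) ^ n \<le> (1/2) * (150 * t) ^ n"
      by linarith
    from mult_right_mono[OF this P] show ?thesis .
  qed
  also have "\<dots> \<le> (D / \<beta>) * (150 * t) ^ n * P"
    using \<beta> D(2) t P by (intro mult_right_mono) (simp_all add: field_simps)
  finally show ?thesis
    by (simp add: t_def P_def)
qed

lemma S_D_close_to_code_point:
  fixes n :: nat
  assumes x: "x \<in> S_D n \<alpha> \<beta> D" and D: "D > 0" and \<beta>: "0 \<le> \<beta>"
    and h: "0 < h" "h \<le> 1" and K: "3 * D * sqrt n + n/2 \<le> K"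
  shows "\<exists>p\<in>codes n \<alpha> h K.
           l2 n (\<lambda>i. x i - code_point h p i / l2 n (code_point h p)) \<le> (2 * \<beta> + h) * sqrt n / D"
proof -
  have "ereal D \<le> LCD n \<alpha> \<beta> x" "LCD n \<alpha> \<beta> x < ereal (3 * D)"
    using x D by (auto simp: S_D_def intro: le_less_trans)
  then obtain d where d: "D \<le> d" "d < 3 * D" and adm: "LCD_admissible n \<alpha> \<beta> x d"
    by (rule LCD_admissible_between)
  have "d * sqrt n + n/2 \<le> K"
    using d K mult_right_mono[of d "3 * D" "sqrt n"] by simp
  moreover have "x \<in> unit_sphere n"
    using x by (simp add: S_D_def)
  ultimately obtain p where "p \<in> codes n \<alpha> h K"
    and p: "l2 n (\<lambda>i. x i - code_point h p i / l2 n (code_point h p)) \<le> (2 * \<beta> + h) * sqrt n / d"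
    using close_to_code_point[OF _ adm \<beta> h] by blast
  moreover have "(2 * \<beta> + h) * sqrt n / d \<le> (2 * \<beta> + h) * sqrt n / D"
    using d D \<beta> h by (intro divide_left_mono) simp_all
  ultimately show ?thesis
    by (meson order_trans)
qed

lemma card_subset_S_D_le:
  fixes n :: nat and \<alpha> \<beta> D :: real
  assumes n: "n \<ge> 1" and \<alpha>: "0 < \<alpha>" "\<alpha> < 1" and \<beta>: "0 < \<beta>" "\<beta> < 1/2"
    and D: "D \<ge> sqrt (\<alpha> * n)"
    and N: "N \<subseteq> S_D n \<alpha> \<beta> D" "card N \<le> card (codes n \<alpha> (2 * \<beta> / 3) (3 * D * sqrt n + n/2))"
  shows "real (card N) \<le> (D / \<beta>) * (150 * D / sqrt (\<alpha> * n)) ^ n * (1 / \<beta>) powr (\<alpha> * n)"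
proof (cases "N = {}")
  case True
  have "0 < sqrt (\<alpha> * n)"
    using n \<alpha> by simp
  with D have "0 \<le> D"
    by linarith
  then have "0 \<le> (D / \<beta>) * (150 * D / sqrt (\<alpha> * n)) ^ n * (1 / \<beta>) powr (\<alpha> * n)"
    using \<alpha> \<beta> by (intro mult_nonneg_nonneg zero_le_power divide_nonneg_nonneg) simp_all
  with True show ?thesis
    by simp
next
  case False
  then have "D \<ge> 1/4"
    using N(1) quarter_le_of_mem_S_D \<beta> by fastforce
  have "real (card N) \<le> real (card (codes n \<alpha> (2 * \<beta> / 3) (3 * D * sqrt n + n/2)))"
    using N(2) by simp
  also have "\<dots> \<le> 2 ^ n * (exp 1 ^ n * (1 + 2 * (3 * D * sqrt n + n/2) / n) ^ n
                       * (1 / (2 * \<beta> / 3)) powr (\<alpha> * n))"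
    using n \<open>D \<ge> 1/4\<close> \<beta> by (intro card_codes_le) (simp_all add: add_nonneg_pos)
  also have "\<dots> \<le> (D / \<beta>) * (150 * D / sqrt (\<alpha> * n)) ^ n * (1 / \<beta>) powr (\<alpha> * n)"
    by (rule code_count_le_claimed_bound[OF n \<alpha> \<beta> D \<open>D \<ge> 1/4\<close>])
  finally show ?thesis .
qed

theorem claim6p2:
  shows "\<exists>c::real. c > 0 \<and>
    (\<forall>(n::nat) (\<alpha>::real) (\<beta>::real) (D::real).
       n \<ge> 1 \<longrightarrow> 0 < \<alpha> \<longrightarrow> \<alpha> < 1 \<longrightarrow> 0 < \<beta> \<longrightarrow> \<beta> < 1/2 \<longrightarrow>
       D \<ge> sqrt (\<alpha> * real n) \<longrightarrow>
       (\<exists>N. N \<subseteq> S_D n \<alpha> \<beta> D \<and> finite N \<and>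
          (\<forall>x\<in>S_D n \<alpha> \<beta> D. \<exists>y\<in>N. l2 n (\<lambda>i. x i - y i) \<le> 6 * \<beta> * sqrt (real n) / D) \<and>
          real (card N) \<le> (D / \<beta>) * (c * D / sqrt (\<alpha> * real n)) ^ n * (1 / \<beta>) powr (\<alpha> * real n)))"
proof (intro exI[of _ 150] conjI allI impI)
  fix n :: nat and \<alpha> \<beta> D :: real
  assume n: "1 \<le> n" and \<alpha>: "0 < \<alpha>" "\<alpha> < 1" and \<beta>: "0 < \<beta>" "\<beta> < 1/2"
    and D: "sqrt (\<alpha> * real n) \<le> D"
  define h where "h = 2 * \<beta> / 3"
  define K where "K = 3 * D * sqrt n + n/2"
  have "0 < sqrt (\<alpha> * n)"
    using n \<alpha> by simp
  with D have "D > 0"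
    by linarith
  have h: "0 < h" "h \<le> 1" and K: "3 * D * sqrt n + n/2 \<le> K"
    using \<beta> by (simp_all add: h_def K_def)
  have close: "\<forall>x\<in>S_D n \<alpha> \<beta> D. \<exists>p\<in>codes n \<alpha> h K.
      l2 n (\<lambda>i. x i - code_point h p i / l2 n (code_point h p)) \<le> (2 * \<beta> + h) * sqrt n / D"
    using S_D_close_to_code_point[OF _ \<open>D > 0\<close> less_imp_le[OF \<beta>(1)] h K] by blast
  have "2 * ((2 * \<beta> + h) * sqrt n / D) \<le> 6 * \<beta> * sqrt n / D"
    using \<open>D > 0\<close> \<beta> by (simp add: h_def field_simps)
  from net_of_finite_code[OF finite_codes close this]
  obtain N where N: "N \<subseteq> S_D n \<alpha> \<beta> D" "finite N" "card N \<le> card (codes n \<alpha> h K)"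
    "\<forall>x\<in>S_D n \<alpha> \<beta> D. \<exists>y\<in>N. l2 n (\<lambda>i. x i - y i) \<le> 6 * \<beta> * sqrt n / D"
    by blast
  moreover have "real (card N) \<le> (D / \<beta>) * (150 * D / sqrt (\<alpha> * n)) ^ n * (1 / \<beta>) powr (\<alpha> * n)"
    using card_subset_S_D_le[OF n \<alpha> \<beta> D N(1)] N(3) by (simp add: h_def K_def)
  ultimately show "\<exists>N. N \<subseteq> S_D n \<alpha> \<beta> D \<and> finite N \<and>
      (\<forall>x\<in>S_D n \<alpha> \<beta> D. \<exists>y\<in>N. l2 n (\<lambda>i. x i - y i) \<le> 6 * \<beta> * sqrt (real n) / D) \<and>
      real (card N) \<le> (D / \<beta>) * (150 * D / sqrt (\<alpha> * real n)) ^ n * (1 / \<beta>) powr (\<alpha> * real n)"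
    by blast
qed simp

end
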